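(* There exists a weak consistent digital ray system (WCDR) $R_o$ in $\mathbb{Z}^2$ whose error in the $L_\infty$ metric is exactly $1.5$; that is, $\sup_{p\in\mathbb{Z}^2} E(R_o(p)) = 1.5$.
   Context: Consider the unit grid graph on $\mathbb{Z}^2$: two points $p=(p_x,p_y)$, $q=(q_x,q_y)$ are adjacent iff $|p_x-q_x|+|p_y-q_y|=1$. Fix a root $o\in\mathbb{Z}^2$. A digital ray system $R_o$ assigns to every $p\in\mathbb{Z}^2$ a set $R_o(p)\subseteq\mathbb{Z}^2$ (the digital segment from $o$ to $p$). It is a weak consistent digital ray system (WCDR) if: (S1) for every $p$, $R_o(p)$ is the vertex set of a path from $o$ to $p$ in the grid graph; (S3) (subsegment property) for every $p$ and every $q\in R_o(p)$, $R_o(q)\subseteq R_o(p)$; (S5) (monotonicity) for every $p$, if $p_x=o_x$ then every $r\in R_o(p)$ has $r_x=o_x$, and if $p_y=o_y$ then every $r\in R_o(p)$ has $r_y=o_y$. (The prolongation property is not required.) The error of a segment is $E(R_o(p))=\max_{v\in R_o(p)} \mathrm{dist}_\infty(v,\overline{op})$, where $\overline{op}$ is the Euclidean segment from $o$ to $p$ and $\mathrm{dist}_\infty$ is the $L_\infty$ distance from a point to a set. The error of the WCDR is $\sup_{p\in\mathbb{Z}^2}E(R_o(p))$. *)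

theory Defs
  imports "HOL-Analysis.Analysis"
begin

type_synonym gpt = "int \<times> int"

definition grid_adj :: "gpt \<Rightarrow> gpt \<Rightarrow> bool" where
  "grid_adj p q \<longleftrightarrow> \<bar>fst p - fst q\<bar> + \<bar>snd p - snd q\<bar> = 1"

definition is_grid_path_set :: "gpt set \<Rightarrow> gpt \<Rightarrow> gpt \<Rightarrow> bool" where
  "is_grid_path_set S a b \<longleftrightarrow>
     (\<exists>xs. xs \<noteq> [] \<and> distinct xs \<and> hd xs = a \<and> last xs = b \<and> set xs = S \<and>
           (\<forall>i. Suc i < length xs \<longrightarrow> grid_adj (xs ! i) (xs ! Suc i)))"

text \<open>Weak consistent digital ray system with root r0: axioms (S1), (S3), (S5).\<close>
definition WCDR :: "gpt \<Rightarrow> (gpt \<Rightarrow> gpt set) \<Rightarrow> bool" where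
  "WCDR r0 R \<longleftrightarrow>
     (\<forall>p. is_grid_path_set (R p) r0 p) \<and>
     (\<forall>p. \<forall>q\<in>R p. R q \<subseteq> R p) \<and>
     (\<forall>p. (fst p = fst r0 \<longrightarrow> (\<forall>r\<in>R p. fst r = fst r0)) \<and>
          (snd p = snd r0 \<longrightarrow> (\<forall>r\<in>R p. snd r = snd r0)))"

definition rpt :: "gpt \<Rightarrow> real \<times> real" where
  "rpt p = (real_of_int (fst p), real_of_int (snd p))"

definition linf_dist :: "real \<times> real \<Rightarrow> real \<times> real \<Rightarrow> real" where
  "linf_dist u v = max \<bar>fst u - fst v\<bar> \<bar>snd u - snd v\<bar>"

definition euclid_seg :: "gpt \<Rightarrow> gpt \<Rightarrow> (real \<times> real) set" where
  "euclid_seg r0 p = closed_segment (rpt r0) (rpt p)"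

definition linf_dist_set :: "real \<times> real \<Rightarrow> (real \<times> real) set \<Rightarrow> real" where
  "linf_dist_set v A = (INF a\<in>A. linf_dist v a)"

definition seg_error :: "gpt \<Rightarrow> (gpt \<Rightarrow> gpt set) \<Rightarrow> gpt \<Rightarrow> real" where
  "seg_error r0 R p = (SUP v\<in>R p. linf_dist_set (rpt v) (euclid_seg r0 p))"

end

(*
  In the quadrant x, y \<ge> 0 the segment towards p = (a, b) is built level by level along the
  antidiagonals x + y = m.  At level m the ratio a / (a + b) is replaced by the midpoint of the
  dyadic interval of length 1 / h containing it, h being the largest power of two below m, and
  the level-m point is obtained by rounding.  As m \<le> 2 h, this point lies within
  1/2 + m / (2 h) \<le> 3/2 of the Euclidean segment.  Dyadic intervals are nested, so a point of
  the ray, taken as a new target, reproduces the same intervals on all lower levels: this is the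
  subsegment property.  The ray need not pass through p, but it meets p or a neighbour of p on
  one of the levels a + b, a + b - 1, a + b + 1, and is redirected to p there.  The point (2, 2)
  lies on no other ray, so its segment can be replaced by a detour through (3, 0), which has
  error exactly 3/2.  Reflections carry the quadrant to all of Z^2.
*)
theory Submission
  imports Defs "HOL-Library.Discrete_Functions"
begin

section \<open>Grid paths\<close>

lemma is_grid_path_set_iff:
  "is_grid_path_set S a b \<longleftrightarrow>
     (\<exists>xs. xs \<noteq> [] \<and> distinct xs \<and> hd xs = a \<and> last xs = b \<and> set xs = S \<and>
           successively grid_adj xs)"
  unfolding is_grid_path_set_def successively_conv_nth ..

lemma is_grid_path_set_snoc:
  assumes "is_grid_path_set S a b" "grid_adj b c" "c \<notin> S"
  shows "is_grid_path_set (insert c S) a c"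
proof -
  obtain xs where xs: "xs \<noteq> []" "distinct xs" "hd xs = a" "last xs = b" "set xs = S"
    "successively grid_adj xs"
    using assms(1) unfolding is_grid_path_set_iff by blast
  then show ?thesis
    unfolding is_grid_path_set_iff using assms(2,3)
    by (intro exI[of _ "xs @ [c]"]) (auto simp: successively_append_iff)
qed

lemma is_grid_path_set_image:
  assumes "is_grid_path_set S a b" "inj f" "\<And>u v. grid_adj u v \<Longrightarrow> grid_adj (f u) (f v)"
  shows "is_grid_path_set (f ` S) (f a) (f b)"
proof -
  obtain xs where xs: "xs \<noteq> []" "distinct xs" "hd xs = a" "last xs = b" "set xs = S"
    "successively grid_adj xs"
    using assms(1) unfolding is_grid_path_set_iff by blast
  have "successively grid_adj (map f xs)"
    unfolding successively_map using xs(6) by (rule successively_mono) (use assms(3) in blast)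
  moreover have "inj_on f (set xs)"
    using assms(2) by (rule inj_on_subset) simp
  ultimately show ?thesis
    unfolding is_grid_path_set_iff using xs
    by (intro exI[of _ "map f xs"]) (auto simp: distinct_map hd_map last_map)
qed

lemma is_grid_path_set_chain:
  assumes "inj f" "\<And>m. m < L \<Longrightarrow> grid_adj (f m) (f (Suc m))"
  shows "is_grid_path_set (f ` {..L}) (f 0) (f L)"
proof -
  have "successively (\<lambda>i j. grid_adj (f i) (f j)) [0..<Suc L]"
    unfolding successively_conv_nth using assms(2) by (simp del: upt_Suc)
  moreover have "inj_on f {0..<Suc L}"
    using assms(1) by (rule inj_on_subset) simp
  ultimately show ?thesis
    unfolding is_grid_path_set_iff
    by (intro exI[of _ "map f [0..<Suc L]"])
      (auto simp: successively_map distinct_map hd_map last_map atLeastLessThanSuc_atLeastAtMost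
        atLeast0AtMost simp del: upt_Suc)
qed

lemma is_grid_path_set_nonempty: "is_grid_path_set S a b \<Longrightarrow> S \<noteq> {}"
  by (auto simp: is_grid_path_set_def)

lemma is_grid_path_set_x_axis:
  assumes "0 \<le> x"
  shows "is_grid_path_set ({0..x} \<times> {0}) (0, 0) (x, 0)"
proof -
  have "inj (\<lambda>j. (int j, 0 :: int))"
    by (rule injI) simp
  then have "is_grid_path_set ((\<lambda>j. (int j, 0)) ` {..nat x}) (0, 0) (int (nat x), 0)"
    using is_grid_path_set_chain[of "\<lambda>j. (int j, 0)" "nat x"] by (simp add: grid_adj_def)
  moreover have "(\<lambda>j. (int j, 0 :: int)) ` {..nat x} = {0..x} \<times> {0}"
    using assms by (auto simp: image_iff intro!: bexI[of _ "nat _"])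
  ultimately show ?thesis
    using assms by simp
qed

section \<open>Dyadic approximation of a direction\<close>

text \<open>For m \<ge> 2, the largest power of two strictly below m.\<close>
definition dyadic_scale :: "nat \<Rightarrow> nat" where
  "dyadic_scale m = 2 ^ floor_log (m - 1)"

lemma dyadic_scale_pos: "0 < dyadic_scale m"
  by (simp add: dyadic_scale_def)

lemma dyadic_scale_le: "m \<le> 2 * dyadic_scale m"
  using floor_log_exp2_gt[of "m - 1"] by (simp add: dyadic_scale_def)

lemma dyadic_scale_less: "2 \<le> m \<Longrightarrow> dyadic_scale m < m"
  using floor_log_exp2_le[of "m - 1"] by (simp add: dyadic_scale_def)

lemma dyadic_scale_eqI:
  assumes "2 ^ k < m" "m \<le> 2 * 2 ^ k"
  shows "dyadic_scale m = 2 ^ k"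
  using assms by (simp add: dyadic_scale_def floor_log_eqI)

lemma dyadic_scale_dvd: "m' \<le> m \<Longrightarrow> dyadic_scale m' dvd dyadic_scale m"
  unfolding dyadic_scale_def by (intro le_imp_power_dvd floor_log_le_iff) simp

lemma dyadic_scale_Suc:
  "dyadic_scale (Suc m) = dyadic_scale m \<or>
   (m = 2 * dyadic_scale m \<and> dyadic_scale (Suc m) = 2 * dyadic_scale m)"
proof -
  consider "m = 0" | "m = 2 * dyadic_scale m" | "0 < m" "m \<noteq> 2 * dyadic_scale m"
    by blast
  then show ?thesis
  proof cases
    case 1
    then show ?thesis by (simp add: dyadic_scale_def)
  next
    case 2
    moreover have "0 < m"
      using 2 dyadic_scale_pos[of m] by linarith
    ultimately show ?thesis
      using dyadic_scale_eqI[of "Suc (floor_log (m - 1))" "Suc m"]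
      by (simp add: dyadic_scale_def)
  next
    case 3
    have "dyadic_scale m < Suc m"
      using 3 dyadic_scale_less[of m] by (cases "m = 1") (auto simp: dyadic_scale_def)
    moreover have "Suc m \<le> 2 * dyadic_scale m"
      using 3 dyadic_scale_le[of m] by linarith
    ultimately have "dyadic_scale (Suc m) = dyadic_scale m"
      unfolding dyadic_scale_def[of m] by (rule dyadic_scale_eqI)
    then show ?thesis ..
  qed
qed

lemma dyadic_scale_Suc_double:
  assumes "m = 2 * dyadic_scale m"
  shows "dyadic_scale (Suc m) = 2 * dyadic_scale m"
  using dyadic_scale_Suc[of m] dyadic_scale_le[of "Suc m"] assms by auto

definition dyadic_bin :: "nat \<Rightarrow> nat \<Rightarrow> nat \<Rightarrow> nat" where
  "dyadic_bin a n m = a * dyadic_scale m div n"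

text \<open>The midpoint of the interval of length 1 / dyadic_scale m containing a / n; the level-m
  point of the ray of direction a / n is the rounded point of the antidiagonal x + y = m in
  this direction.\<close>
definition dyadic_midpoint :: "nat \<Rightarrow> nat \<Rightarrow> nat \<Rightarrow> real" where
  "dyadic_midpoint a n m = (2 * dyadic_bin a n m + 1) / (2 * dyadic_scale m)"

definition ray_x :: "nat \<Rightarrow> nat \<Rightarrow> nat \<Rightarrow> nat" where
  "ray_x a n m = nat (round (m * dyadic_midpoint a n m))"

lemma dyadic_bin_less: "a < n \<Longrightarrow> dyadic_bin a n m < dyadic_scale m"
  unfolding dyadic_bin_def
  by (intro less_mult_imp_div_less) (simp add: dyadic_scale_pos mult.commute)

lemma dyadic_bin_bounds:
  assumes "0 < n"
  shows "dyadic_bin a n m \<le> a * dyadic_scale m / n"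
    and "a * dyadic_scale m / n < dyadic_bin a n m + 1"
proof -
  let ?x = "real (a * dyadic_scale m) / real n"
  have floor_eq: "\<lfloor>?x\<rfloor> = int (dyadic_bin a n m)"
    unfolding dyadic_bin_def by (rule floor_divide_of_nat_eq)
  have "real (dyadic_bin a n m) \<le> ?x \<and> ?x < real (dyadic_bin a n m) + 1"
    using floor_correct[of ?x] unfolding floor_eq by simp
  then show "dyadic_bin a n m \<le> a * dyadic_scale m / n"
    and "a * dyadic_scale m / n < dyadic_bin a n m + 1"
    by simp_all
qed

lemma dyadic_bin_nested:
  assumes "m' \<le> m" "0 < n"
  shows "dyadic_bin a n m' = dyadic_bin a n m div (dyadic_scale m div dyadic_scale m')"
proof -
  obtain d where d: "dyadic_scale m = dyadic_scale m' * d"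
    using dyadic_scale_dvd[OF assms(1)] by (auto elim: dvdE)
  then have "0 < d"
    using dyadic_scale_pos[of m] by (simp add: gr0I)
  then show ?thesis
    using d dyadic_scale_pos[of m']
    by (simp add: dyadic_bin_def div_mult2_eq[symmetric] mult.assoc)
qed

lemma dyadic_midpoint_approx:
  assumes "0 < n"
  shows "\<bar>dyadic_midpoint a n m - a / n\<bar> \<le> 1 / (2 * real (dyadic_scale m))"
proof -
  define H I X where "H = real (dyadic_scale m)" and "I = real (dyadic_bin a n m)"
    and "X = real a / real n"
  have "0 < H"
    unfolding H_def using dyadic_scale_pos by simp
  have "I \<le> X * H" "X * H < I + 1"
    using dyadic_bin_bounds[OF assms, of a m] unfolding H_def I_def X_def by simp_all
  then have "\<bar>2 * I + 1 - 2 * H * X\<bar> \<le> 1"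
    by (simp add: abs_le_iff algebra_simps)
  moreover have "dyadic_midpoint a n m - a / n = (2 * I + 1 - 2 * H * X) / (2 * H)"
    unfolding dyadic_midpoint_def H_def I_def X_def using \<open>0 < H\<close> H_def
    by (simp add: field_simps)
  ultimately show ?thesis
    using \<open>0 < H\<close> by (simp add: H_def abs_divide divide_right_mono)
qed

lemma dyadic_midpoint_approx_scaled:
  assumes "0 < n" "0 \<le> x"
  shows "\<bar>x * dyadic_midpoint a n m - a * x / n\<bar> \<le> x / (2 * real (dyadic_scale m))"
proof -
  have "x * dyadic_midpoint a n m - a * x / n = x * (dyadic_midpoint a n m - a / n)"
    by (simp add: algebra_simps)
  then have "\<bar>x * dyadic_midpoint a n m - a * x / n\<bar> = x * \<bar>dyadic_midpoint a n m - a / n\<bar>"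
    using assms(2) by (simp add: abs_mult)
  also have "\<dots> \<le> x * (1 / (2 * real (dyadic_scale m)))"
    using dyadic_midpoint_approx[OF assms(1)] assms(2) by (rule mult_left_mono)
  finally show ?thesis
    by simp
qed

lemma dyadic_midpoint_bounds:
  assumes "a < n"
  shows "1 / (2 * real (dyadic_scale m)) \<le> dyadic_midpoint a n m"
    and "dyadic_midpoint a n m \<le> 1 - 1 / (2 * real (dyadic_scale m))"
proof -
  define H I where "H = real (dyadic_scale m)" and "I = real (dyadic_bin a n m)"
  have "0 < H"
    unfolding H_def using dyadic_scale_pos by simp
  have "I + 1 \<le> H"
    using dyadic_bin_less[OF assms, of m] unfolding H_def I_def by linarith
  have midpoint: "dyadic_midpoint a n m = (2 * I + 1) / (2 * H)"
    unfolding dyadic_midpoint_def H_def I_def by simp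
  have "1 / (2 * H) \<le> (2 * I + 1) / (2 * H)"
    using \<open>0 < H\<close> by (simp add: I_def divide_right_mono)
  moreover have "(2 * I + 1) / (2 * H) + 1 / (2 * H) \<le> 1"
    using \<open>0 < H\<close> \<open>I + 1 \<le> H\<close> by (simp add: field_simps)
  ultimately show "1 / (2 * real (dyadic_scale m)) \<le> dyadic_midpoint a n m"
    "dyadic_midpoint a n m \<le> 1 - 1 / (2 * real (dyadic_scale m))"
    unfolding midpoint by (simp_all add: H_def)
qed

lemma dyadic_midpoint_strict_bounds:
  assumes "a < n"
  shows "0 < dyadic_midpoint a n m" "dyadic_midpoint a n m < 1"
proof -
  have "0 < 1 / (2 * real (dyadic_scale m))"
    using dyadic_scale_pos[of m] by simp
  then show "0 < dyadic_midpoint a n m" "dyadic_midpoint a n m < 1"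
    using dyadic_midpoint_bounds[OF assms, of m] by linarith+
qed

lemma dyadic_midpoint_cong:
  "dyadic_scale m' = dyadic_scale m \<Longrightarrow> dyadic_midpoint a n m' = dyadic_midpoint a n m"
  by (simp add: dyadic_midpoint_def dyadic_bin_def)

lemma int_ray_x: "int (ray_x a n m) = round (m * dyadic_midpoint a n m)"
proof -
  have "0 \<le> real m * dyadic_midpoint a n m"
    unfolding dyadic_midpoint_def by simp
  then have "0 \<le> round (real m * dyadic_midpoint a n m)"
    using round_mono by fastforce
  then show ?thesis
    unfolding ray_x_def by simp
qed

lemma ray_x_div:
  "ray_x a n m = ((2 * dyadic_bin a n m + 1) * m + dyadic_scale m) div (2 * dyadic_scale m)"
proof -
  have "real m * dyadic_midpoint a n m + 1 / 2 =
        real ((2 * dyadic_bin a n m + 1) * m + dyadic_scale m) / real (2 * dyadic_scale m)"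
    using dyadic_scale_pos[of m] by (simp add: dyadic_midpoint_def field_simps)
  then have "int (ray_x a n m) =
      int (((2 * dyadic_bin a n m + 1) * m + dyadic_scale m) div (2 * dyadic_scale m))"
    unfolding int_ray_x round_def by (simp only: floor_divide_of_nat_eq)
  then show ?thesis by simp
qed

lemma real_ray_x: "real (ray_x a n m) = round (m * dyadic_midpoint a n m)"
  by (metis int_ray_x of_int_of_nat_eq)

lemma ray_x_eqI:
  assumes "k - 1/2 \<le> m * dyadic_midpoint a n m" "m * dyadic_midpoint a n m < k + 1/2"
  shows "ray_x a n m = k"
proof -
  have "round (m * dyadic_midpoint a n m) = int k"
    using assms by (intro round_unique) auto
  then show ?thesis
    using int_ray_x[of a n m] by simp
qed

lemma ray_x_1: "a < n \<Longrightarrow> ray_x a n 1 = 1"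
  by (simp add: ray_x_div dyadic_bin_def dyadic_scale_def)

lemma ray_x_error:
  assumes "a < n"
  shows "\<bar>real (ray_x a n m) - a * m / n\<bar> \<le> 3 / 2"
proof -
  let ?c = "dyadic_midpoint a n m"
  have "\<bar>real (ray_x a n m) - m * ?c\<bar> \<le> 1 / 2"
    unfolding real_ray_x by (rule of_int_round_abs_le)
  moreover have "\<bar>m * ?c - real a * m / n\<bar> \<le> m / (2 * real (dyadic_scale m))"
    using assms by (intro dyadic_midpoint_approx_scaled) auto
  moreover have "m / (2 * real (dyadic_scale m)) \<le> 1"
    using dyadic_scale_le[of m] dyadic_scale_pos[of m] by (simp add: field_simps)
  ultimately show ?thesis
    by linarith
qed

lemma ray_x_double:
  assumes "m = 2 * dyadic_scale m"
  shows "ray_x a n m = 2 * dyadic_bin a n m + 1"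
  using assms dyadic_scale_pos[of m] by (intro ray_x_eqI) (simp_all add: dyadic_midpoint_def)

lemma ray_x_Suc_double:
  assumes "a < n" "m = 2 * dyadic_scale m"
  shows "ray_x a n (Suc m) = Suc (dyadic_bin a n (Suc m))"
proof (rule ray_x_eqI)
  let ?j = "dyadic_bin a n (Suc m)" and ?h = "dyadic_scale m"
  have scale_Suc: "dyadic_scale (Suc m) = 2 * ?h"
    using assms(2) by (rule dyadic_scale_Suc_double)
  have "real m = 2 * ?h"
    using assms(2) by simp
  then have "Suc m * dyadic_midpoint a n (Suc m) = ?j + 1 / 2 + (2 * ?j + 1) / (4 * ?h)"
    using scale_Suc dyadic_scale_pos[of m] by (simp add: dyadic_midpoint_def field_simps)
  moreover have "0 \<le> (2 * ?j + 1) / (4 * ?h)"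
    by simp
  moreover have "?j < 2 * ?h"
    using dyadic_bin_less[OF assms(1), of "Suc m"] scale_Suc by simp
  then have "(2 * ?j + 1) / (4 * ?h) < 1"
    by simp
  ultimately show "real (Suc ?j) - 1 / 2 \<le> Suc m * dyadic_midpoint a n (Suc m)"
    and "Suc m * dyadic_midpoint a n (Suc m) < real (Suc ?j) + 1 / 2"
    by linarith+
qed

lemma ray_x_Suc:
  assumes "a < n"
  shows "ray_x a n (Suc m) = ray_x a n m \<or> ray_x a n (Suc m) = Suc (ray_x a n m)"
proof (cases "m = 2 * dyadic_scale m")
  case True
  have "dyadic_scale (Suc m) div dyadic_scale m = 2"
    using dyadic_scale_Suc_double[OF True] dyadic_scale_pos[of m] by simp
  then have "dyadic_bin a n m = dyadic_bin a n (Suc m) div 2"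
    using dyadic_bin_nested[of m "Suc m" n a] assms by simp
  then show ?thesis
    using ray_x_double[OF True] ray_x_Suc_double[OF assms True] by auto
next
  case False
  let ?c = "dyadic_midpoint a n m"
  have "dyadic_midpoint a n (Suc m) = ?c"
    using dyadic_scale_Suc[of m] False by (intro dyadic_midpoint_cong) auto
  have "0 < ?c" "?c < 1"
    using dyadic_midpoint_strict_bounds[OF assms] by auto
  have "round (m * ?c) \<le> round (m * ?c + ?c)"
    using \<open>0 < ?c\<close> by (intro round_mono) simp
  moreover have "round (m * ?c + ?c) < round (m * ?c) + 2"
    using of_int_round_le[of "m * ?c + ?c"] of_int_round_gt[of "m * ?c"] \<open>?c < 1\<close>
    by linarith
  moreover have "int (ray_x a n (Suc m)) = round (m * ?c + ?c)"
    using int_ray_x[of a n "Suc m"] \<open>dyadic_midpoint a n (Suc m) = ?c\<close>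
    by (simp add: algebra_simps)
  ultimately show ?thesis
    using int_ray_x[of a n m] by linarith
qed

lemma ray_x_interior:
  assumes "a < n" "2 \<le> m"
  shows "0 < ray_x a n m" "ray_x a n m < m"
proof -
  let ?c = "dyadic_midpoint a n m" and ?h = "real (dyadic_scale m)"
  have "0 < ?h" "?h < m"
    using dyadic_scale_pos[of m] dyadic_scale_less[OF assms(2)] by simp_all
  then have "1 / 2 < m * (1 / (2 * ?h))"
    by (simp add: field_simps)
  moreover have "m * (1 / (2 * ?h)) \<le> m * ?c" "m * ?c \<le> m * (1 - 1 / (2 * ?h))"
    using dyadic_midpoint_bounds[OF assms(1), of m] by (metis mult_left_mono of_nat_0_le_iff)+
  ultimately have "1 / 2 < m * ?c" "m * ?c < m - 1 / 2"
    by (simp_all add: algebra_simps)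
  then have "0 < round (m * ?c)" "round (m * ?c) < int m"
    using of_int_round_gt[of "m * ?c"] of_int_round_le[of "m * ?c"] by linarith+
  then show "0 < ray_x a n m" "ray_x a n m < m"
    using int_ray_x[of a n m] by linarith+
qed

lemma ray_x_le: "a < n \<Longrightarrow> ray_x a n m \<le> m"
  using ray_x_interior[of a n m] ray_x_1[of a n]
  by (cases "m \<le> 1") (auto simp: le_Suc_eq ray_x_def)

lemma dyadic_bin_ray_x:
  assumes "a < n" "2 \<le> m"
  shows "dyadic_bin (ray_x a n m) m m = dyadic_bin a n m"
proof -
  define G H I where "G = real (ray_x a n m)" and "H = real (dyadic_scale m)"
    and "I = real (dyadic_bin a n m)"
  have "0 < H" "H < m"
    unfolding H_def using dyadic_scale_pos[of m] dyadic_scale_less[OF assms(2)] by simp_all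
  have "\<bar>G - m * dyadic_midpoint a n m\<bar> \<le> 1 / 2"
    unfolding G_def real_ray_x by (rule of_int_round_abs_le)
  moreover have "G * H - I * m - m / 2 = (G - m * dyadic_midpoint a n m) * H"
    using \<open>0 < H\<close> by (simp add: dyadic_midpoint_def H_def I_def field_simps)
  ultimately have "\<bar>G * H - I * m - m / 2\<bar> \<le> H / 2"
    using \<open>0 < H\<close> by (simp add: abs_mult mult_right_mono)
  then have "I * m \<le> G * H" "G * H < I * m + m"
    using \<open>H < m\<close> unfolding abs_le_iff by linarith+
  then have "real (m * dyadic_bin a n m) \<le> real (ray_x a n m * dyadic_scale m)"
    "real (ray_x a n m * dyadic_scale m) < real (m * Suc (dyadic_bin a n m))"
    unfolding G_def H_def I_def by (simp_all add: algebra_simps)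
  then have "m * dyadic_bin a n m \<le> ray_x a n m * dyadic_scale m"
    "ray_x a n m * dyadic_scale m < m * Suc (dyadic_bin a n m)"
    by (simp_all only: of_nat_le_iff of_nat_less_iff)
  then show ?thesis
    unfolding dyadic_bin_def[of "ray_x a n m"] by (rule div_nat_eqI)
qed

lemma ray_x_nested:
  assumes "a < n" "2 \<le> m" "m' \<le> m"
  shows "ray_x (ray_x a n m) m m' = ray_x a n m'"
proof -
  have "dyadic_bin (ray_x a n m) m m' = dyadic_bin a n m'"
    using dyadic_bin_nested[OF assms(3)] dyadic_bin_ray_x[OF assms(1,2)] assms by simp
  then show ?thesis
    by (simp add: ray_x_def dyadic_midpoint_def)
qed

lemma ray_x_4_odd:
  assumes "a < n"
  shows "odd (ray_x a n 4)"
proof -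
  have "dyadic_scale 4 = 2"
    using dyadic_scale_eqI[of 1 4] by simp
  then have "ray_x a n 4 = 2 * dyadic_bin a n 4 + 1"
    by (intro ray_x_eqI) (simp_all add: dyadic_midpoint_def)
  then show ?thesis
    by simp
qed

lemma round_near_neighbour:
  fixes z c :: real and a :: int
  assumes "0 < c" "c < 1" "\<bar>z - a\<bar> < 1"
  shows "round z = a \<or> round (z - c) \<in> {a - 1, a} \<or> round (z + c) \<in> {a, a + 1}"
proof -
  have round_eq: "round x = k" if "k - 1/2 \<le> x" "x < k + 1/2" for x :: real and k :: int
    using that by (intro round_unique) auto
  have near: "real_of_int a - 1 < z" "z < real_of_int a + 1"
    using assms(3) by linarith+
  consider "z < a - 1/2" "z - c < a - 3/2" | "z < a - 1/2" "a - 3/2 \<le> z - c"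
    | "a - 1/2 \<le> z" "z < a + 1/2" | "a + 1/2 \<le> z" "z - c < a + 1/2"
    | "a + 1/2 \<le> z" "a + 1/2 \<le> z - c"
    by linarith
  then show ?thesis
  proof cases
    case 1
    then have "round (z + c) = a"
      using assms near by (intro round_eq) (simp; argo)+
    then show ?thesis by simp
  next
    case 2
    then have "round (z - c) = a - 1"
      using assms near by (intro round_eq) (simp; argo)+
    then show ?thesis by simp
  next
    case 3
    then show ?thesis
      using round_eq by blast
  next
    case 4
    then have "round (z - c) = a"
      using assms near by (intro round_eq) (simp; argo)+
    then show ?thesis by simp
  next
    case 5
    then have "round (z + c) = a + 1"
      using assms near by (intro round_eq) (simp; argo)+
    then show ?thesis by simp
  qed
qed

lemma ray_x_endpoint_scale_Suc:
  assumes "0 < a" "a < n" "n = dyadic_scale n + 1"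
  shows "ray_x a n n = a"
proof (rule ray_x_eqI)
  obtain h where h: "dyadic_scale n = h"
    by simp
  then have "0 < h" "n = h + 1"
    using dyadic_scale_pos[of n] assms(3) by simp_all
  obtain a' where "a = Suc a'"
    using assms(1) gr0_implies_Suc by blast
  then have "a * h div n = a - 1"
    using assms(2) \<open>n = h + 1\<close> by (intro div_nat_eqI) (simp_all add: algebra_simps)
  then have midpoint: "dyadic_midpoint a n n = (2 * real a - 1) / (2 * h)"
    unfolding dyadic_midpoint_def dyadic_bin_def h using assms(1) by (simp add: of_nat_diff)
  have "real n = h + 1"
    using \<open>n = h + 1\<close> by simp
  then have "n * dyadic_midpoint a n n = a - 1 / 2 + (2 * real a - 1) / (2 * h)"
    unfolding midpoint using \<open>0 < h\<close> by (simp add: field_simps)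
  moreover have "0 \<le> (2 * real a - 1) / (2 * h)" "(2 * real a - 1) / (2 * h) < 1"
    using assms(1,2) \<open>0 < h\<close> \<open>n = h + 1\<close> by (simp_all add: field_simps)
  ultimately show "a - 1 / 2 \<le> n * dyadic_midpoint a n n" "n * dyadic_midpoint a n n < a + 1 / 2"
    by linarith+
qed

lemma ray_x_endpoint_scale_double:
  assumes "a < n" "n = 2 * dyadic_scale n"
  shows "ray_x a n (n + 1) = a + 1"
proof -
  have "dyadic_scale (Suc n) = n"
    using dyadic_scale_Suc_double[OF assms(2)] assms(2) by linarith
  then have "dyadic_bin a n (Suc n) = a"
    using assms by (simp add: dyadic_bin_def)
  then show ?thesis
    using ray_x_Suc_double[OF assms] by simp
qed

lemma ray_x_endpoint_scale_const:
  assumes "a < n" "n < 2 * dyadic_scale n"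
    and "dyadic_scale (n - 1) = dyadic_scale n" "dyadic_scale (n + 1) = dyadic_scale n"
  shows "ray_x a n n = a \<or> ray_x a n (n - 1) \<in> {a - 1, a} \<or> ray_x a n (n + 1) \<in> {a, a + 1}"
proof -
  let ?c = "dyadic_midpoint a n n" and ?h = "real (dyadic_scale n)"
  have midpoints: "dyadic_midpoint a n (n - 1) = ?c" "dyadic_midpoint a n (n + 1) = ?c"
    using assms(3,4) by (simp_all only: dyadic_midpoint_cong[of "n - 1" n] dyadic_midpoint_cong[of "n + 1" n])
  have "0 < ?c" "?c < 1"
    using dyadic_midpoint_strict_bounds[OF assms(1)] by auto
  have "\<bar>n * ?c - real a * n / n\<bar> \<le> n / (2 * ?h)"
    using assms by (intro dyadic_midpoint_approx_scaled) auto
  then have "\<bar>n * ?c - a\<bar> \<le> n / (2 * ?h)"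
    using assms by simp
  also have "\<dots> < 1"
    using assms(2) dyadic_scale_pos[of n] by (simp add: field_simps)
  finally have "\<bar>n * ?c - real_of_int (int a)\<bar> < 1"
    by simp
  then have "round (n * ?c) = int a \<or> round (n * ?c - ?c) \<in> {int a - 1, int a} \<or>
      round (n * ?c + ?c) \<in> {int a, int a + 1}"
    using \<open>0 < ?c\<close> \<open>?c < 1\<close> by (intro round_near_neighbour)
  moreover have "int (ray_x a n (n - 1)) = round (n * ?c - ?c)"
    using int_ray_x[of a n "n - 1"] midpoints assms by (simp add: of_nat_diff algebra_simps)
  moreover have "int (ray_x a n (n + 1)) = round (n * ?c + ?c)"
    using int_ray_x[of a n "n + 1"] midpoints by (simp add: algebra_simps)
  ultimately show ?thesis
    using int_ray_x[of a n n] by auto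
qed

lemma ray_x_near_endpoint:
  assumes "0 < a" "a < n"
  shows "ray_x a n n = a \<or> ray_x a n (n - 1) \<in> {a - 1, a} \<or> ray_x a n (n + 1) \<in> {a, a + 1}"
proof -
  let ?h = "dyadic_scale n"
  obtain k where k: "?h = 2 ^ k"
    unfolding dyadic_scale_def by blast
  consider "n = ?h + 1" | "n = 2 * ?h" | "?h + 1 < n" "n < 2 * ?h"
    using dyadic_scale_less[of n] dyadic_scale_le[of n] assms by linarith
  then show ?thesis
  proof cases
    case 1
    then show ?thesis
      using ray_x_endpoint_scale_Suc[OF assms] by simp
  next
    case 2
    then show ?thesis
      using ray_x_endpoint_scale_double[OF assms(2)] by simp
  next
    case 3
    then have "dyadic_scale (n - 1) = ?h" "dyadic_scale (n + 1) = ?h"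
      unfolding k by (simp_all add: dyadic_scale_eqI)
    then show ?thesis
      using ray_x_endpoint_scale_const[OF assms(2) 3(2)] by simp
  qed
qed

section \<open>Segments in the first quadrant\<close>

definition ray_point :: "nat \<Rightarrow> nat \<Rightarrow> nat \<Rightarrow> gpt" where
  "ray_point a n m = (int (ray_x a n m), int m - int (ray_x a n m))"

definition end_level :: "nat \<Rightarrow> nat \<Rightarrow> nat" where
  "end_level a b =
     (let n = a + b in
      if ray_x a n n = a then n else if ray_x a n (n - 1) \<in> {a - 1, a} then n - 1 else n + 1)"

definition dyadic_ray :: "nat \<Rightarrow> nat \<Rightarrow> gpt set" where
  "dyadic_ray a b = insert (int a, int b) (ray_point a (a + b) ` {..end_level a b})"

lemma ray_point_0 [simp]: "ray_point a n 0 = (0, 0)"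
  by (simp add: ray_point_def ray_x_def)

lemma ray_point_1: "a < n \<Longrightarrow> ray_point a n 1 = (1, 0)"
  using ray_x_1[of a n] by (simp add: ray_point_def)

lemma ray_point_level: "fst (ray_point a n m) + snd (ray_point a n m) = int m"
  by (simp add: ray_point_def)

lemma ray_point_nonneg: "a < n \<Longrightarrow> 0 \<le> fst (ray_point a n m) \<and> 0 \<le> snd (ray_point a n m)"
  using ray_x_le[of a n m] by (simp add: ray_point_def)

lemma inj_ray_point: "inj (ray_point a n)"
  by (rule injI) (metis ray_point_level of_nat_eq_iff)

lemma ray_point_adj: "a < n \<Longrightarrow> grid_adj (ray_point a n m) (ray_point a n (Suc m))"
  using ray_x_Suc[of a n m] by (auto simp: ray_point_def grid_adj_def)

lemma end_level_cases:
  assumes "0 < a" "0 < b"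
  obtains (reached) "end_level a b = a + b" "ray_point a (a + b) (a + b) = (int a, int b)"
  | (adjacent) "end_level a b \<in> {a + b - 1, a + b + 1}"
      "grid_adj (ray_point a (a + b) (end_level a b)) (int a, int b)"
      "(int a, int b) \<notin> ray_point a (a + b) ` {..end_level a b}"
proof -
  let ?n = "a + b"
  have "a < ?n"
    using assms by simp
  have level: "m = ?n" if "ray_point a ?n m = (int a, int b)" for m
    using ray_point_level[of a ?n m] that by simp
  consider "ray_x a ?n ?n = a"
    | "ray_x a ?n ?n \<noteq> a" "ray_x a ?n (?n - 1) \<in> {a - 1, a}"
    | "ray_x a ?n ?n \<noteq> a" "ray_x a ?n (?n - 1) \<notin> {a - 1, a}"
      "ray_x a ?n (?n + 1) \<in> {a, a + 1}"
    using ray_x_near_endpoint[OF assms(1) \<open>a < ?n\<close>] by blast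
  then show ?thesis
  proof cases
    case 1
    then show ?thesis
      using reached by (simp add: end_level_def ray_point_def)
  next
    case 2
    then have "end_level a b = ?n - 1"
      by (simp add: end_level_def)
    moreover have "grid_adj (ray_point a ?n (?n - 1)) (int a, int b)"
      using 2 assms by (auto simp: ray_point_def grid_adj_def of_nat_diff)
    moreover have "(int a, int b) \<notin> ray_point a ?n ` {..?n - 1}"
      using level assms by fastforce
    ultimately show ?thesis
      using adjacent by simp
  next
    case 3
    then have "end_level a b = ?n + 1"
      by (simp add: end_level_def)
    moreover have "grid_adj (ray_point a ?n (?n + 1)) (int a, int b)"
      using 3 by (auto simp: ray_point_def grid_adj_def)
    moreover have "(int a, int b) \<notin> ray_point a ?n ` {..?n + 1}"
    proof
      assume "(int a, int b) \<in> ray_point a ?n ` {..?n + 1}"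
      then have "ray_point a ?n ?n = (int a, int b)"
        using level by force
      then show False
        using 3 by (simp add: ray_point_def)
    qed
    ultimately show ?thesis
      using adjacent by simp
  qed
qed

lemma dyadic_ray_path:
  assumes "0 < a" "0 < b"
  shows "is_grid_path_set (dyadic_ray a b) (0, 0) (int a, int b)"
proof -
  let ?f = "ray_point a (a + b)" and ?L = "end_level a b"
  have "a < a + b"
    using assms by simp
  then have path: "is_grid_path_set (?f ` {..?L}) (0, 0) (?f ?L)"
    using is_grid_path_set_chain[OF inj_ray_point ray_point_adj] by (metis ray_point_0)
  from assms show ?thesis
  proof (cases rule: end_level_cases)
    case reached
    then have "(int a, int b) \<in> ?f ` {..?L}"
      by (metis atMost_iff image_eqI order_refl)
    then show ?thesis
      using path reached by (simp add: dyadic_ray_def insert_absorb)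
  next
    case adjacent
    then show ?thesis
      unfolding dyadic_ray_def by (intro is_grid_path_set_snoc[OF path])
  qed
qed

lemma dyadic_ray_ray_point:
  assumes "a < n" "2 \<le> m"
  shows "dyadic_ray (ray_x a n m) (m - ray_x a n m) = ray_point a n ` {..m}"
proof -
  let ?g = "ray_x a n m"
  have sum: "?g + (m - ?g) = m"
    using ray_x_interior[OF assms] by simp
  have same: "ray_point ?g m j = ray_point a n j" if "j \<le> m" for j
    using ray_x_nested[OF assms that] by (simp add: ray_point_def)
  have "end_level ?g (m - ?g) = m"
    using ray_x_nested[OF assms order_refl] by (simp add: end_level_def sum)
  moreover have "(int ?g, int (m - ?g)) = ray_point a n m"
    using ray_x_interior[OF assms] by (simp add: ray_point_def of_nat_diff)
  ultimately show ?thesis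
    using same unfolding dyadic_ray_def sum by (auto simp: image_def)
qed

text \<open>Admissible because (2, 2) lies on no other ray (ray_x_4_odd); the point (3, 0) is at
  distance 3/2 from the diagonal.\<close>
definition detour_22 :: "gpt list" where
  "detour_22 = [(0, 0), (1, 0), (2, 0), (3, 0), (3, 1), (2, 1), (1, 1), (1, 2), (2, 2)]"

definition quadrant_ray :: "gpt \<Rightarrow> gpt set" where
  "quadrant_ray p =
     (if fst p = 0 \<or> snd p = 0 then {0..fst p} \<times> {0..snd p}
      else if p = (2, 2) then set detour_22
      else dyadic_ray (nat (fst p)) (nat (snd p)))"

lemma quadrant_ray_dyadic_ray:
  "0 < a \<Longrightarrow> 0 < b \<Longrightarrow> (int a, int b) \<noteq> (2, 2) \<Longrightarrow>
    quadrant_ray (int a, int b) = dyadic_ray a b"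
  by (auto simp: quadrant_ray_def)

lemma quadrant_ray_ray_point:
  assumes "a < n"
  shows "quadrant_ray (ray_point a n m) = ray_point a n ` {..m}"
proof -
  consider "m = 0" | "m = 1" | "2 \<le> m"
    by linarith
  then show ?thesis
  proof cases
    case 1
    then show ?thesis
      by (simp add: quadrant_ray_def)
  next
    case 2
    have point: "ray_point a n m = (1, 0)"
      using 2 ray_point_1[OF assms] by simp
    have "{..m} = {0, m}"
      using 2 by auto
    then have "ray_point a n ` {..m} = {(0, 0), (1, 0)}"
      using point by simp
    moreover have "{0..1::int} = {0, 1}"
      by auto
    ultimately show ?thesis
      unfolding point by (simp add: quadrant_ray_def)
  next
    case 3
    let ?g = "ray_x a n m"
    have "0 < ?g" "?g < m"
      using ray_x_interior[OF assms 3] by simp_all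
    moreover have "(int ?g, int (m - ?g)) \<noteq> (2, 2)"
    proof
      assume "(int ?g, int (m - ?g)) = (2, 2)"
      then have "m = 4" "?g = 2"
        by auto
      then show False
        using ray_x_4_odd[OF assms] by simp
    qed
    ultimately have "quadrant_ray (int ?g, int (m - ?g)) = dyadic_ray ?g (m - ?g)"
      by (intro quadrant_ray_dyadic_ray) simp_all
    then have "quadrant_ray (int ?g, int (m - ?g)) = ray_point a n ` {..m}"
      using dyadic_ray_ray_point[OF assms 3] by simp
    then show ?thesis
      using \<open>?g < m\<close> by (simp add: ray_point_def of_nat_diff)
  qed
qed

lemma quadrant_ray_subset_dyadic_ray:
  assumes "0 < a" "0 < b" "quadrant_ray (int a, int b) = dyadic_ray a b" "q \<in> dyadic_ray a b"
  shows "quadrant_ray q \<subseteq> dyadic_ray a b"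
proof -
  have "a < a + b"
    using assms by simp
  from assms(4) consider "q = (int a, int b)"
    | m where "m \<le> end_level a b" "q = ray_point a (a + b) m"
    unfolding dyadic_ray_def by blast
  then show ?thesis
  proof cases
    case 1
    then show ?thesis
      using assms(3) by simp
  next
    case 2
    then show ?thesis
      using quadrant_ray_ray_point[OF \<open>a < a + b\<close>] unfolding dyadic_ray_def by auto
  qed
qed

lemma quadrant_ray_detour_subset:
  assumes "q \<in> set detour_22"
  shows "quadrant_ray q \<subseteq> set detour_22"
proof -
  have scales: "dyadic_scale 2 = 1" "dyadic_scale 3 = 2" "dyadic_scale 4 = 2"
    using dyadic_scale_eqI[of 0 2] dyadic_scale_eqI[of 1 3] dyadic_scale_eqI[of 1 4] by simp_all
  have p342: "ray_point 3 4 2 = (1, 1)" and p343: "ray_point 3 4 3 = (2, 1)"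
    and p344: "ray_point 3 4 4 = (3, 1)" and p132: "ray_point 1 3 2 = (1, 1)"
    and p133: "ray_point 1 3 3 = (1, 2)"
    by (simp_all add: ray_point_def ray_x_div dyadic_bin_def scales)
  have "{..4::nat} = {0, 1, 2, 3, 4}" "{..3::nat} = {0, 1, 2, 3}"
    by auto
  then have ray34: "ray_point 3 4 ` {..4} \<subseteq> set detour_22"
    and ray13: "ray_point 1 3 ` {..3} \<subseteq> set detour_22"
    using p342 p343 p344 p132 p133 ray_point_1[of 3 4] ray_point_1[of 1 3]
    by (simp_all add: detour_22_def)
  then have on_ray34: "quadrant_ray (ray_point 3 4 m) \<subseteq> set detour_22" if "m \<le> 4" for m
    using quadrant_ray_ray_point[of 3 4 m] that by auto
  have "quadrant_ray (1, 1) \<subseteq> set detour_22"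
    using on_ray34[of 2] by (simp add: p342)
  moreover have "quadrant_ray (2, 1) \<subseteq> set detour_22"
    using on_ray34[of 3] by (simp add: p343)
  moreover have "quadrant_ray (3, 1) \<subseteq> set detour_22"
    using on_ray34[of 4] by (simp add: p344)
  moreover have "quadrant_ray (1, 2) \<subseteq> set detour_22"
    using quadrant_ray_ray_point[of 1 3 3] ray13 unfolding p133 by simp
  moreover have "quadrant_ray (x, 0) \<subseteq> set detour_22" if "0 \<le> x" "x \<le> 3" for x
  proof -
    have "{0..3::int} = {0, 1, 2, 3}"
      by auto
    then have "{0..3::int} \<times> {0} \<subseteq> set detour_22"
      by (simp add: detour_22_def)
    moreover have "quadrant_ray (x, 0) \<subseteq> {0..3} \<times> {0}"
      using that by (auto simp: quadrant_ray_def)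
    ultimately show ?thesis
      by (rule order_trans[rotated])
  qed
  moreover have "quadrant_ray (2, 2) = set detour_22"
    by (simp add: quadrant_ray_def)
  moreover have "q \<in> {(0, 0), (1, 0), (2, 0), (3, 0), (3, 1), (2, 1), (1, 1), (1, 2), (2, 2)}"
    using assms by (simp add: detour_22_def)
  ultimately show ?thesis
    by (elim insertE emptyE) simp_all
qed

lemma quadrant_ray_path:
  assumes "0 \<le> fst p" "0 \<le> snd p"
  shows "is_grid_path_set (quadrant_ray p) (0, 0) p"
proof -
  obtain x y where p: "p = (x, y)"
    by fastforce
  consider "y = 0" | "x = 0" | "p = (2, 2)" | "0 < x" "0 < y" "p \<noteq> (2, 2)"
    using assms p by fastforce
  then show ?thesis
  proof cases
    case 1
    then show ?thesis
      using is_grid_path_set_x_axis[of x] assms p by (simp add: quadrant_ray_def)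
  next
    case 2
    have "is_grid_path_set (prod.swap ` ({0..y} \<times> {0})) (prod.swap (0, 0)) (prod.swap (y, 0))"
      using is_grid_path_set_x_axis[of y] assms p
      by (intro is_grid_path_set_image) (auto simp: grid_adj_def)
    then show ?thesis
      using 2 p by (simp add: quadrant_ray_def product_swap)
  next
    case 3
    then show ?thesis
      unfolding is_grid_path_set_iff
      by (intro exI[of _ detour_22]) (simp add: quadrant_ray_def detour_22_def grid_adj_def)
  next
    case 4
    then show ?thesis
      using dyadic_ray_path[of "nat x" "nat y"] p by (auto simp: quadrant_ray_def)
  qed
qed

lemma quadrant_ray_on_axis:
  assumes "v \<in> quadrant_ray p"
  shows "fst p = 0 \<Longrightarrow> fst v = 0" and "snd p = 0 \<Longrightarrow> snd v = 0"
  using assms by (auto simp: quadrant_ray_def)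

lemma dyadic_ray_nonneg:
  assumes "0 < a" "0 < b" "v \<in> dyadic_ray a b"
  shows "0 \<le> fst v \<and> 0 \<le> snd v"
  using assms ray_point_nonneg[of a "a + b"] by (auto simp: dyadic_ray_def)

lemma quadrant_ray_nonneg:
  assumes "0 \<le> fst p" "0 \<le> snd p" "v \<in> quadrant_ray p"
  shows "0 \<le> fst v \<and> 0 \<le> snd v"
proof (cases "fst p = 0 \<or> snd p = 0 \<or> p = (2, 2)")
  case True
  then show ?thesis
    using assms by (auto simp: quadrant_ray_def detour_22_def)
next
  case False
  then show ?thesis
    using assms dyadic_ray_nonneg[of "nat (fst p)" "nat (snd p)" v] by (simp add: quadrant_ray_def)
qed

lemma quadrant_ray_subset:
  assumes "0 \<le> fst p" "0 \<le> snd p" "q \<in> quadrant_ray p"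
  shows "quadrant_ray q \<subseteq> quadrant_ray p"
proof -
  obtain x y where p: "p = (x, y)"
    by fastforce
  consider "x = 0 \<or> y = 0" | "p = (2, 2)" | "0 < x" "0 < y" "p \<noteq> (2, 2)"
    using assms p by fastforce
  then show ?thesis
  proof cases
    case 1
    then show ?thesis
      using assms p by (auto simp: quadrant_ray_def)
  next
    case 2
    then show ?thesis
      using assms quadrant_ray_detour_subset by (simp add: quadrant_ray_def)
  next
    case 3
    then have "quadrant_ray (int (nat x), int (nat y)) = dyadic_ray (nat x) (nat y)"
      using p by (intro quadrant_ray_dyadic_ray) auto
    then show ?thesis
      using 3 p assms quadrant_ray_subset_dyadic_ray[of "nat x" "nat y" q] by simp
  qed
qed

lemma linf_dist_set_segment_le:
  fixes t c :: real
  assumes "0 \<le> t" "t \<le> 1"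
    and "\<bar>real_of_int (fst v) - t * real_of_int (fst p)\<bar> \<le> c"
    and "\<bar>real_of_int (snd v) - t * real_of_int (snd p)\<bar> \<le> c"
  shows "linf_dist_set (rpt v) (euclid_seg (0, 0) p) \<le> c"
proof -
  have "t *\<^sub>R rpt p \<in> euclid_seg (0, 0) p"
    unfolding euclid_seg_def closed_segment_def using assms(1,2)
    by (auto simp: rpt_def zero_prod_def intro!: exI[of _ t])
  then have "linf_dist_set (rpt v) (euclid_seg (0, 0) p) \<le> linf_dist (rpt v) (t *\<^sub>R rpt p)"
    unfolding linf_dist_set_def
    by (intro cINF_lower bdd_belowI[of _ 0]) (auto simp: linf_dist_def)
  also have "\<dots> \<le> c"
    using assms(3,4) by (simp add: linf_dist_def rpt_def)
  finally show ?thesis .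
qed

lemma linf_dist_set_segment_end:
  assumes "u = p \<or> grid_adj u p"
  shows "linf_dist_set (rpt u) (euclid_seg (0, 0) p) \<le> 1"
proof -
  have "\<bar>fst u - fst p\<bar> \<le> 1" "\<bar>snd u - snd p\<bar> \<le> 1"
    using assms by (auto simp: grid_adj_def)
  then have "real_of_int \<bar>fst u - fst p\<bar> \<le> 1" "real_of_int \<bar>snd u - snd p\<bar> \<le> 1"
    by simp_all
  then show ?thesis
    by (intro linf_dist_set_segment_le[of 1]) simp_all
qed

lemma ray_point_error:
  assumes "0 < b" "m \<le> a + b"
  shows "linf_dist_set (rpt (ray_point a (a + b) m)) (euclid_seg (0, 0) (int a, int b)) \<le> 3 / 2"
proof -
  let ?n = "a + b"
  let ?g = "real (ray_x a ?n m)"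
  have "a < ?n"
    using assms by simp
  have err: "\<bar>?g - real a * m / ?n\<bar> \<le> 3 / 2"
    using ray_x_error[OF \<open>a < ?n\<close>] by simp
  have "real m - ?g - m / ?n * b = real a * m / ?n - ?g"
    using \<open>a < ?n\<close> by (simp add: field_simps)
  then have "\<bar>real m - ?g - m / ?n * b\<bar> = \<bar>?g - real a * m / ?n\<bar>"
    by (simp only: abs_minus_commute)
  then have "\<bar>real m - ?g - m / ?n * b\<bar> \<le> 3 / 2"
    using err by linarith
  moreover have "\<bar>?g - m / ?n * a\<bar> \<le> 3 / 2"
    using err by (simp add: algebra_simps)
  moreover have "real m / ?n \<le> 1"
    using assms by (simp add: divide_le_eq_1 flip: of_nat_add)
  ultimately show ?thesis
    using ray_x_le[OF \<open>a < ?n\<close>, of m]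
    by (intro linf_dist_set_segment_le[of "m / ?n"]) (simp_all add: ray_point_def of_nat_diff)
qed

lemma dyadic_ray_error:
  assumes "0 < a" "0 < b" "v \<in> dyadic_ray a b"
  shows "linf_dist_set (rpt v) (euclid_seg (0, 0) (int a, int b)) \<le> 3 / 2"
proof -
  let ?p = "(int a, int b)" and ?L = "end_level a b"
  from assms(3) consider "v = ?p" | m where "m \<le> ?L" "v = ray_point a (a + b) m"
    unfolding dyadic_ray_def by blast
  then show ?thesis
  proof cases
    case 1
    then show ?thesis
      using linf_dist_set_segment_end[of v ?p] by simp
  next
    case (2 m)
    from assms(1,2) show ?thesis
    proof (cases rule: end_level_cases)
      case reached
      then show ?thesis
        using 2 assms(2) ray_point_error by simp
    next
      case adjacent
      show ?thesis
      proof (cases "m \<le> a + b")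
        case True
        then show ?thesis
          using 2 assms(2) ray_point_error by simp
      next
        case False
        then have "m = ?L"
          using 2 adjacent by auto
        then show ?thesis
          using 2 adjacent linf_dist_set_segment_end[of v ?p] by simp
      qed
    qed
  qed
qed

lemma quadrant_ray_error:
  assumes "0 \<le> fst p" "0 \<le> snd p" "v \<in> quadrant_ray p"
  shows "linf_dist_set (rpt v) (euclid_seg (0, 0) p) \<le> 3 / 2"
proof -
  obtain x y where p: "p = (x, y)"
    by fastforce
  consider "x = 0" "y = 0" | "0 < x" "y = 0" | "x = 0" "0 < y" | "p = (2, 2)"
    | "0 < x" "0 < y" "p \<noteq> (2, 2)"
    using assms p by fastforce
  then show ?thesis
  proof cases
    case 1
    then show ?thesis
      using assms p by (intro linf_dist_set_segment_le[of 0]) (auto simp: quadrant_ray_def)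
  next
    case 2
    then show ?thesis
      using assms p
      by (intro linf_dist_set_segment_le[of "real_of_int (fst v) / x"]) (auto simp: quadrant_ray_def)
  next
    case 3
    then show ?thesis
      using assms p
      by (intro linf_dist_set_segment_le[of "real_of_int (snd v) / y"]) (auto simp: quadrant_ray_def)
  next
    case 4
    then have "v \<in> set detour_22"
      using assms by (simp add: quadrant_ray_def)
    then show ?thesis
      unfolding 4 detour_22_def
      by (intro linf_dist_set_segment_le[of "real_of_int (fst v + snd v) / 4"]) auto
  next
    case 5
    then show ?thesis
      using assms p dyadic_ray_error[of "nat x" "nat y" v] by (auto simp: quadrant_ray_def)
  qed
qed

lemma detour_22_far_point: "3 / 2 \<le> linf_dist_set (rpt (3, 0)) (euclid_seg (0, 0) (2, 2))"
  unfolding linf_dist_set_def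
proof (rule cINF_greatest)
  show "euclid_seg (0, 0) (2, 2) \<noteq> {}"
    by (simp add: euclid_seg_def)
next
  fix w
  assume "w \<in> euclid_seg (0, 0) (2, 2)"
  then obtain t :: real where "w = (2 * t, 2 * t)"
    by (auto simp: euclid_seg_def closed_segment_def rpt_def zero_prod_def)
  then show "3 / 2 \<le> linf_dist (rpt (3, 0)) w"
    by (cases "t \<le> 3 / 4") (auto simp: linf_dist_def rpt_def le_max_iff_disj abs_if)
qed

lemma seg_error_quadrant_ray_le:
  assumes "0 \<le> fst p" "0 \<le> snd p"
  shows "seg_error (0, 0) quadrant_ray p \<le> 3 / 2"
  unfolding seg_error_def
  using is_grid_path_set_nonempty[OF quadrant_ray_path[OF assms]] quadrant_ray_error[OF assms]
  by (rule cSUP_least)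

lemma seg_error_quadrant_ray_22: "seg_error (0, 0) quadrant_ray (2, 2) = 3 / 2"
proof (rule antisym)
  show "seg_error (0, 0) quadrant_ray (2, 2) \<le> 3 / 2"
    by (rule seg_error_quadrant_ray_le) simp_all
  have "bdd_above ((\<lambda>v. linf_dist_set (rpt v) (euclid_seg (0, 0) (2, 2))) ` quadrant_ray (2, 2))"
    using quadrant_ray_error[of "(2, 2)"] by (intro bdd_aboveI[of _ "3 / 2"]) auto
  moreover have "(3, 0) \<in> quadrant_ray (2, 2)"
    by (simp add: quadrant_ray_def detour_22_def)
  ultimately show "3 / 2 \<le> seg_error (0, 0) quadrant_ray (2, 2)"
    unfolding seg_error_def using detour_22_far_point by (rule cSUP_upper2)
qed

section \<open>Reflection to the whole lattice\<close>

definition orient :: "int \<Rightarrow> int" where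
  "orient d = (if d < 0 then -1 else 1)"

definition reflect :: "gpt \<Rightarrow> gpt \<Rightarrow> gpt \<Rightarrow> gpt" where
  "reflect r0 p v =
     (fst r0 + orient (fst p - fst r0) * fst v, snd r0 + orient (snd p - snd r0) * snd v)"

definition quadrant_coords :: "gpt \<Rightarrow> gpt \<Rightarrow> gpt" where
  "quadrant_coords r0 p = (\<bar>fst p - fst r0\<bar>, \<bar>snd p - snd r0\<bar>)"

definition ray_system :: "gpt \<Rightarrow> gpt \<Rightarrow> gpt set" where
  "ray_system r0 p = reflect r0 p ` quadrant_ray (quadrant_coords r0 p)"

lemma abs_orient [simp]: "\<bar>orient d\<bar> = 1"
  by (simp add: orient_def)

lemma orient_mult_abs: "orient d * \<bar>d\<bar> = d"
  by (simp add: orient_def)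

lemma reflect_origin [simp]: "reflect r0 p (0, 0) = r0"
  by (simp add: reflect_def)

lemma reflect_quadrant_coords [simp]: "reflect r0 p (quadrant_coords r0 p) = p"
  by (simp add: reflect_def quadrant_coords_def orient_mult_abs)

lemma quadrant_coords_nonneg: "0 \<le> fst (quadrant_coords r0 p)" "0 \<le> snd (quadrant_coords r0 p)"
  by (simp_all add: quadrant_coords_def)

lemma quadrant_coords_reflect:
  "0 \<le> fst v \<Longrightarrow> 0 \<le> snd v \<Longrightarrow> quadrant_coords r0 (reflect r0 p v) = v"
  by (simp add: quadrant_coords_def reflect_def abs_mult prod_eq_iff)

lemma inj_reflect: "inj (reflect r0 p)"
  by (rule injI) (auto simp: reflect_def orient_def prod_eq_iff split: if_splits)

lemma grid_adj_reflect: "grid_adj (reflect r0 p u) (reflect r0 p w) \<longleftrightarrow> grid_adj u w"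
proof -
  have "fst (reflect r0 p u) - fst (reflect r0 p w) = orient (fst p - fst r0) * (fst u - fst w)"
    "snd (reflect r0 p u) - snd (reflect r0 p w) = orient (snd p - snd r0) * (snd u - snd w)"
    by (simp_all add: reflect_def algebra_simps)
  then show ?thesis
    by (simp add: grid_adj_def abs_mult)
qed

lemma reflect_reflect:
  assumes "0 \<le> fst v" "0 \<le> snd v" "fst v = 0 \<Longrightarrow> fst w = 0" "snd v = 0 \<Longrightarrow> snd w = 0"
  shows "reflect r0 (reflect r0 p v) w = reflect r0 p w"
proof -
  have "orient (orient d * x) * y = orient d * y" if "0 \<le> x" "x = 0 \<Longrightarrow> y = 0" for d x y
    using that by (cases "x = 0") (auto simp: orient_def mult_less_0_iff)
  from this[OF assms(1,3)] this[OF assms(2,4)] show ?thesis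
    by (simp add: reflect_def)
qed

lemma ray_system_WCDR: "WCDR r0 (ray_system r0)"
  unfolding WCDR_def
proof (intro conjI allI ballI impI)
  fix p
  show "is_grid_path_set (ray_system r0 p) r0 p"
    using is_grid_path_set_image[OF quadrant_ray_path[OF quadrant_coords_nonneg[of r0 p]],
        of "reflect r0 p"] inj_reflect
    by (simp add: ray_system_def grid_adj_reflect)
next
  fix p q
  assume "q \<in> ray_system r0 p"
  then obtain v where v: "v \<in> quadrant_ray (quadrant_coords r0 p)" "q = reflect r0 p v"
    unfolding ray_system_def by blast
  have v_nonneg: "0 \<le> fst v" "0 \<le> snd v"
    using quadrant_ray_nonneg[OF quadrant_coords_nonneg v(1)] by simp_all
  then have "ray_system r0 q = reflect r0 q ` quadrant_ray v"
    by (simp add: ray_system_def v(2) quadrant_coords_reflect)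
  also have "\<dots> = reflect r0 p ` quadrant_ray v"
    using reflect_reflect[OF v_nonneg] quadrant_ray_on_axis unfolding v(2)
    by (intro image_cong) auto
  also have "\<dots> \<subseteq> ray_system r0 p"
    using quadrant_ray_subset[OF quadrant_coords_nonneg v(1)] by (auto simp: ray_system_def)
  finally show "ray_system r0 q \<subseteq> ray_system r0 p" .
next
  fix p r
  assume "r \<in> ray_system r0 p"
  then obtain v where "v \<in> quadrant_ray (quadrant_coords r0 p)" "r = reflect r0 p v"
    unfolding ray_system_def by blast
  then show "fst p = fst r0 \<Longrightarrow> fst r = fst r0" and "snd p = snd r0 \<Longrightarrow> snd r = snd r0"
    using quadrant_ray_on_axis by (auto simp: reflect_def quadrant_coords_def)
qed

lemma seg_error_ray_system:
  "seg_error r0 (ray_system r0) p = seg_error (0, 0) quadrant_ray (quadrant_coords r0 p)"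
proof -
  let ?A = "quadrant_coords r0 p"
  define s1 s2 where "s1 = real_of_int (orient (fst p - fst r0))"
    and "s2 = real_of_int (orient (snd p - snd r0))"
  define L where "L x = (s1 * fst x, s2 * snd x)" for x :: "real \<times> real"
  define F where "F x = rpt r0 + L x" for x
  have "linear L"
    by (rule linearI) (simp_all add: L_def algebra_simps)
  have F_rpt: "rpt (reflect r0 p v) = F (rpt v)" for v
    by (simp add: F_def L_def rpt_def reflect_def s1_def s2_def)
  have "\<bar>s1\<bar> = 1" "\<bar>s2\<bar> = 1"
    by (simp_all add: s1_def s2_def orient_def)
  then have F_dist: "linf_dist (F x) (F y) = linf_dist x y" for x y
    by (simp add: F_def L_def linf_dist_def abs_mult flip: right_diff_distrib)
  have "euclid_seg r0 p = closed_segment (F (rpt (0, 0))) (F (rpt ?A))"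
    using F_rpt[of "(0, 0)"] F_rpt[of ?A] by (simp add: euclid_seg_def)
  also have "\<dots> = F ` euclid_seg (0, 0) ?A"
    unfolding F_def closed_segment_translation closed_segment_linear_image[OF \<open>linear L\<close>]
    by (simp add: euclid_seg_def image_image)
  finally have seg: "euclid_seg r0 p = F ` euclid_seg (0, 0) ?A" .
  have "linf_dist_set (rpt (reflect r0 p v)) (euclid_seg r0 p) =
        linf_dist_set (rpt v) (euclid_seg (0, 0) ?A)" for v
    unfolding seg F_rpt linf_dist_set_def image_image F_dist ..
  then show ?thesis
    by (simp add: seg_error_def ray_system_def image_image)
qed

theorem theorem1:
  fixes r0 :: gpt
  shows "\<exists>R. WCDR r0 R \<and> bdd_above (range (seg_error r0 R)) \<and>
             (SUP p. seg_error r0 R p) = 3 / 2"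
proof (intro exI conjI)
  have bound: "seg_error r0 (ray_system r0) p \<le> 3 / 2" for p
    unfolding seg_error_ray_system by (rule seg_error_quadrant_ray_le quadrant_coords_nonneg)+
  have "seg_error r0 (ray_system r0) (fst r0 + 2, snd r0 + 2) = 3 / 2"
    unfolding seg_error_ray_system using seg_error_quadrant_ray_22 by (simp add: quadrant_coords_def)
  then show "(SUP p. seg_error r0 (ray_system r0) p) = 3 / 2"
    using bound by (intro cSup_eq_maximum) (auto simp: image_iff)
  show "bdd_above (range (seg_error r0 (ray_system r0)))"
    using bound by (intro bdd_aboveI[of _ "3 / 2"]) auto
  show "WCDR r0 (ray_system r0)"
    by (rule ray_system_WCDR)
qed

end
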